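(* Let $W\in\{\mathrm{A}_{\frac12\infty},\mathrm{D}_{\frac12\infty}\}$. The endomorphisms $\dot J_W$, ${}^t\dot J_W$ of $H_{W,\mathbb{C}}$ and their inverses extend to bounded operators on the Hilbert space $\overline H_{W,\mathbb{C}}$, and the extensions of $\dot J_W$ and ${}^t\dot J_W$ (resp. of their inverses) are adjoint (transpose) to each other with respect to $\langle\cdot,\cdot\rangle$.
   Context: Index sets: $C_{W,0}=\{c_0^{(n)}:n\ge1\}$ for $W=\mathrm{A}_{\frac12\infty}$ and $C_{W,0}=\{c_0^{(n)}:n\ge1\}\cup\{c_0^+,c_0^-\}$ for $W=\mathrm{D}_{\frac12\infty}$; $C_{W,1}=\{c_1^{(n)}:n\ge1\}$; $C_W=C_{W,0}\sqcup C_{W,1}$. Adjacency: $c_0^{(n)}$ is adjacent to $c_1^{(n)}$ and $c_1^{(n+1)}$ for all $n\ge1$, and (type D only) $c_0^{\pm}$ are adjacent to $c_1^{(1)}$; no other adjacencies. (Geometrically these are the critical points of $f_W$, with $c\in C_{W,0}$ adjacent to $c'\in C_{W,1}$ iff $c$ lies in the closure of the bounded region of the real zero set containing $c'$.) $H_W=\bigoplus_{c\in C_W}\mathbb{Z}\gamma_c$, $H_{W,i}=\bigoplus_{c\in C_{W,i}}\mathbb{Z}\gamma_c$, $H_{W,\mathbb{C}}=H_W\otimes\mathbb{C}$ with Hermitian product $\langle\sum a_c\gamma_c,\sum b_c\gamma_c\rangle=\sum a_c\bar b_c$; $\overline H_{W,\mathbb{C}}$ is its $\ell^2$-completion. $J_W$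 is the bilinear form with $J_W(\gamma_c,\gamma_{c'})=1$ if $c=c'$, $-1$ if $c\in C_{W,0}$, $c'\in C_{W,1}$ adjacent, $0$ otherwise; ${}^tJ_W(\xi,\eta)=J_W(\eta,\xi)$. The associated endomorphisms are $\dot J_W(u)=\sum_{c\in C_W}J_W(u,\gamma_c)\gamma_c$ and ${}^t\dot J_W(u)=\sum_{c}{}^tJ_W(u,\gamma_c)\gamma_c$ (finite sums by local finiteness). *)

theory Defs
  imports "HOL-Analysis.Analysis"
begin

datatype diag = A_half_inf | D_half_inf

text \<open>Critical points: c_0^(n), c_1^(n) (n >= 1), and c_0^+, c_0^- (type D only).\<close>
datatype crit = C0 nat | C1 nat | C0p | C0m

definition CW0 :: "diag \<Rightarrow> crit set" where
  "CW0 W = {C0 n | n. n \<ge> 1} \<union> (if W = D_half_inf then {C0p, C0m} else {})"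

definition CW1 :: "diag \<Rightarrow> crit set" where
  "CW1 W = {C1 n | n. n \<ge> 1}"

definition CW :: "diag \<Rightarrow> crit set" where
  "CW W = CW0 W \<union> CW1 W"

definition adj :: "diag \<Rightarrow> crit \<Rightarrow> crit \<Rightarrow> bool" where
  "adj W c c' \<longleftrightarrow> c \<in> CW0 W \<and> c' \<in> CW1 W \<and>
     ((\<exists>n. n \<ge> 1 \<and> c = C0 n \<and> (c' = C1 n \<or> c' = C1 (n + 1))) \<or>
      (W = D_half_inf \<and> (c = C0p \<or> c = C0m) \<and> c' = C1 1))"

definition Jm :: "diag \<Rightarrow> crit \<Rightarrow> crit \<Rightarrow> complex" where
  "Jm W c c' = (if c \<in> CW W \<and> c' \<in> CW W then
       (if c = c' then 1 else if adj W c c' then -1 else 0) else 0)"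

definition tJm :: "diag \<Rightarrow> crit \<Rightarrow> crit \<Rightarrow> complex" where
  "tJm W c c' = Jm W c' c"

definition HW :: "diag \<Rightarrow> (crit \<Rightarrow> complex) set" where
  "HW W = {u. (\<forall>c. c \<notin> CW W \<longrightarrow> u c = 0) \<and> finite {c. u c \<noteq> 0}}"

definition Jform :: "(crit \<Rightarrow> crit \<Rightarrow> complex) \<Rightarrow> (crit \<Rightarrow> complex) \<Rightarrow> (crit \<Rightarrow> complex) \<Rightarrow> complex" where
  "Jform M u v = (\<Sum>c\<in>{c. u c \<noteq> 0}. \<Sum>c'\<in>{c'. v c' \<noteq> 0}. u c * v c' * M c c')"

definition gam :: "crit \<Rightarrow> crit \<Rightarrow> complex" where
  "gam c = (\<lambda>x. if x = c then 1 else 0)"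

definition Jdot :: "diag \<Rightarrow> (crit \<Rightarrow> complex) \<Rightarrow> (crit \<Rightarrow> complex)" where
  "Jdot W u = (\<lambda>c. if c \<in> CW W then Jform (Jm W) u (gam c) else 0)"

definition tJdot :: "diag \<Rightarrow> (crit \<Rightarrow> complex) \<Rightarrow> (crit \<Rightarrow> complex)" where
  "tJdot W u = (\<lambda>c. if c \<in> CW W then Jform (tJm W) u (gam c) else 0)"

text \<open>The l^2 completion of H_{W,C}, its Hermitian product and norm.\<close>
definition l2 :: "diag \<Rightarrow> (crit \<Rightarrow> complex) set" where
  "l2 W = {f. (\<forall>c. c \<notin> CW W \<longrightarrow> f c = 0) \<and> (\<lambda>c. (cmod (f c))\<^sup>2) summable_on CW W}"

definition l2inner :: "diag \<Rightarrow> (crit \<Rightarrow> complex) \<Rightarrow> (crit \<Rightarrow> complex) \<Rightarrow> complex" where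
  "l2inner W f g = (\<Sum>\<^sub>\<infinity>c\<in>CW W. f c * cnj (g c))"

definition l2norm :: "diag \<Rightarrow> (crit \<Rightarrow> complex) \<Rightarrow> real" where
  "l2norm W f = sqrt (\<Sum>\<^sub>\<infinity>c\<in>CW W. (cmod (f c))\<^sup>2)"

definition bounded_op :: "diag \<Rightarrow> ((crit \<Rightarrow> complex) \<Rightarrow> (crit \<Rightarrow> complex)) \<Rightarrow> bool" where
  "bounded_op W T \<longleftrightarrow>
     (\<forall>f\<in>l2 W. T f \<in> l2 W) \<and>
     (\<forall>f\<in>l2 W. \<forall>g\<in>l2 W. T (\<lambda>c. f c + g c) = (\<lambda>c. T f c + T g c)) \<and>
     (\<forall>a. \<forall>f\<in>l2 W. T (\<lambda>c. a * f c) = (\<lambda>c. a * T f c)) \<and>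
     (\<exists>K. \<forall>f\<in>l2 W. l2norm W (T f) \<le> K * l2norm W f)"

end

theory Submission
  imports Defs "HOL-Library.Function_Algebras"
begin

text \<open>On the basis \<open>\<gamma>\<^sub>c\<close> one has \<open>Jdot W = 1 - N\<close>, where the adjacency operator N
  sends the C_{W,0}-part of a vector to the C_{W,1}-part; hence \<open>N\<^sup>2 = 0\<close>,
  \<open>(1 - N)\<inverse> = 1 + N\<close>, and likewise \<open>tJdot W = 1 - N\<^sup>*\<close> with inverse \<open>1 + N\<^sup>*\<close>.
  Splitting the edges of the diagram into four matchings writes N as a sum of four
  reindexings along injective maps; each is a partial isometry of \<open>\<ell>\<^sup>2\<close> whose adjoint is
  the reindexing along the inverse map.\<close>

definition square_summable :: "('a \<Rightarrow> complex) \<Rightarrow> bool" where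
  "square_summable f \<longleftrightarrow> (\<lambda>x. (cmod (f x))\<^sup>2) summable_on UNIV"

definition sqnorm :: "('a \<Rightarrow> complex) \<Rightarrow> real" where
  "sqnorm f = (\<Sum>\<^sub>\<infinity>x. (cmod (f x))\<^sup>2)"

definition l2_bounded :: "real \<Rightarrow> (('a \<Rightarrow> complex) \<Rightarrow> 'b \<Rightarrow> complex) \<Rightarrow> bool" where
  "l2_bounded K P \<longleftrightarrow>
     (\<forall>f. square_summable f \<longrightarrow> square_summable (P f) \<and> sqnorm (P f) \<le> K * sqnorm f)"

definition l2_adjoint ::
    "(('a \<Rightarrow> complex) \<Rightarrow> 'b \<Rightarrow> complex) \<Rightarrow> (('b \<Rightarrow> complex) \<Rightarrow> 'a \<Rightarrow> complex) \<Rightarrow> bool" where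
  "l2_adjoint P Q \<longleftrightarrow> (\<forall>f g. square_summable f \<longrightarrow> square_summable g \<longrightarrow>
     (\<Sum>\<^sub>\<infinity>x. P f x * cnj (g x)) = (\<Sum>\<^sub>\<infinity>y. f y * cnj (Q g y)))"

lemma cmod_add_power2_le: "(cmod (a + b))\<^sup>2 \<le> 2 * (cmod a)\<^sup>2 + 2 * (cmod b)\<^sup>2"
proof -
  have "(cmod (a + b))\<^sup>2 \<le> (cmod a + cmod b)\<^sup>2"
    by (simp add: norm_triangle_ineq power_mono)
  also have "\<dots> \<le> 2 * (cmod a)\<^sup>2 + 2 * (cmod b)\<^sup>2"
    using zero_le_power2[of "cmod a - cmod b"] by (simp add: power2_diff power2_sum)
  finally show ?thesis .
qed

lemma square_summable_add:
  assumes f: "square_summable f" and g: "square_summable g"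
  shows "square_summable (f + g)" and "sqnorm (f + g) \<le> 2 * sqnorm f + 2 * sqnorm g"
proof -
  have bound: "(\<lambda>x. 2 * (cmod (f x))\<^sup>2 + 2 * (cmod (g x))\<^sup>2) summable_on UNIV"
    using assms unfolding square_summable_def by (intro summable_on_add summable_on_cmult_right)
  show sum: "square_summable (f + g)" unfolding square_summable_def
    by (rule summable_on_comparison_test[OF bound]) (auto intro: cmod_add_power2_le)
  have "sqnorm (f + g) \<le> (\<Sum>\<^sub>\<infinity>x. 2 * (cmod (f x))\<^sup>2 + 2 * (cmod (g x))\<^sup>2)"
    using sum unfolding sqnorm_def square_summable_def
    by (intro infsum_mono[OF _ bound]) (simp_all add: cmod_add_power2_le)
  also have "\<dots> = 2 * sqnorm f + 2 * sqnorm g"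
    using assms unfolding sqnorm_def square_summable_def
    by (subst infsum_add) (auto intro: summable_on_cmult_right simp: infsum_cmult_right)
  finally show "sqnorm (f + g) \<le> 2 * sqnorm f + 2 * sqnorm g" .
qed

lemma square_summable_cmult:
  assumes "square_summable f"
  shows "square_summable (\<lambda>x. a * f x)" and "sqnorm (\<lambda>x. a * f x) = (cmod a)\<^sup>2 * sqnorm f"
proof -
  have eq: "(\<lambda>x. (cmod (a * f x))\<^sup>2) = (\<lambda>x. (cmod a)\<^sup>2 * (cmod (f x))\<^sup>2)"
    by (simp add: norm_mult power_mult_distrib)
  show "square_summable (\<lambda>x. a * f x)"
    using assms unfolding square_summable_def eq by (rule summable_on_cmult_right)
  show "sqnorm (\<lambda>x. a * f x) = (cmod a)\<^sup>2 * sqnorm f"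
    using assms unfolding sqnorm_def square_summable_def eq by (rule infsum_cmult_right)
qed

lemma square_summable_restrict:
  assumes "square_summable f"
  shows "square_summable (\<lambda>x. if x \<in> X then f x else 0)"
    and "sqnorm (\<lambda>x. if x \<in> X then f x else 0) \<le> sqnorm f"
proof -
  show sum: "square_summable (\<lambda>x. if x \<in> X then f x else 0)"
    using assms unfolding square_summable_def by (rule summable_on_comparison_test) auto
  show "sqnorm (\<lambda>x. if x \<in> X then f x else 0) \<le> sqnorm f"
    using sum assms unfolding sqnorm_def square_summable_def by (intro infsum_mono) auto
qed

lemma square_summable_mult_cnj:
  assumes f: "square_summable f" and g: "square_summable g"
  shows "(\<lambda>x. f x * cnj (g x)) summable_on A"
proof -
  have bound: "(\<lambda>x. (cmod (f x))\<^sup>2 + (cmod (g x))\<^sup>2) summable_on UNIV"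
    using assms unfolding square_summable_def by (rule summable_on_add)
  have "(\<lambda>x. norm (f x * cnj (g x))) summable_on UNIV"
  proof (rule summable_on_comparison_test[OF bound])
    fix x
    have "cmod (f x) * cmod (g x) \<le> (cmod (f x))\<^sup>2 + (cmod (g x))\<^sup>2"
      by (smt (verit) mult_mono mult_nonneg_nonneg norm_ge_zero power2_eq_square)
    then show "norm (f x * cnj (g x)) \<le> (cmod (f x))\<^sup>2 + (cmod (g x))\<^sup>2"
      by (simp add: norm_mult)
  qed auto
  then have "(\<lambda>x. f x * cnj (g x)) summable_on UNIV"
    by (rule abs_summable_summable)
  then show ?thesis by (rule summable_on_subset) simp
qed

lemma l2_bounded_add:
  assumes "l2_bounded K P" and "l2_bounded L Q"
  shows "l2_bounded (2 * K + 2 * L) (P + Q)"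
  unfolding l2_bounded_def
proof (intro allI impI)
  fix f :: "'a \<Rightarrow> complex" assume "square_summable f"
  with assms have P: "square_summable (P f)" "sqnorm (P f) \<le> K * sqnorm f"
    and Q: "square_summable (Q f)" "sqnorm (Q f) \<le> L * sqnorm f"
    by (auto simp: l2_bounded_def)
  show "square_summable ((P + Q) f) \<and> sqnorm ((P + Q) f) \<le> (2 * K + 2 * L) * sqnorm f"
    using square_summable_add[OF P(1) Q(1)] P(2) Q(2) by (simp add: algebra_simps)
qed

lemma l2_adjoint_add:
  assumes "l2_adjoint P Q" and "l2_adjoint P' Q'"
    and "\<And>f. square_summable f \<Longrightarrow> square_summable (P f)"
      "\<And>f. square_summable f \<Longrightarrow> square_summable (P' f)"
      "\<And>g. square_summable g \<Longrightarrow> square_summable (Q g)"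
      "\<And>g. square_summable g \<Longrightarrow> square_summable (Q' g)"
  shows "l2_adjoint (P + P') (Q + Q')"
  unfolding l2_adjoint_def
proof (intro allI impI)
  fix f :: "'a \<Rightarrow> complex" and g :: "'b \<Rightarrow> complex"
  assume f: "square_summable f" and g: "square_summable g"
  have summable: "(\<lambda>x. P f x * cnj (g x)) summable_on UNIV"
    "(\<lambda>x. P' f x * cnj (g x)) summable_on UNIV"
    "(\<lambda>y. f y * cnj (Q g y)) summable_on UNIV" "(\<lambda>y. f y * cnj (Q' g y)) summable_on UNIV"
    using assms(3-6) f g by (auto intro: square_summable_mult_cnj)
  have "(\<Sum>\<^sub>\<infinity>x. (P + P') f x * cnj (g x))
      = (\<Sum>\<^sub>\<infinity>x. P f x * cnj (g x)) + (\<Sum>\<^sub>\<infinity>x. P' f x * cnj (g x))"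
    using summable(1,2) by (simp add: distrib_right infsum_add)
  also have "\<dots> = (\<Sum>\<^sub>\<infinity>y. f y * cnj (Q g y)) + (\<Sum>\<^sub>\<infinity>y. f y * cnj (Q' g y))"
    using assms(1,2) f g by (simp add: l2_adjoint_def)
  also have "\<dots> = (\<Sum>\<^sub>\<infinity>y. f y * cnj ((Q + Q') g y))"
    using summable(3,4) by (simp add: distrib_left infsum_add)
  finally show "(\<Sum>\<^sub>\<infinity>x. (P + P') f x * cnj (g x)) = (\<Sum>\<^sub>\<infinity>y. f y * cnj ((Q + Q') g y))" .
qed

definition pull :: "'a set \<Rightarrow> ('a \<Rightarrow> 'b) \<Rightarrow> ('b \<Rightarrow> complex) \<Rightarrow> 'a \<Rightarrow> complex" where
  "pull D r f = (\<lambda>x. if x \<in> D then f (r x) else 0)"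

lemma square_summable_pull:
  assumes inj: "inj_on r D" and f: "square_summable f"
  shows "square_summable (pull D r f)" and "sqnorm (pull D r f) \<le> sqnorm f"
proof -
  let ?q = "\<lambda>y. (cmod (f y))\<^sup>2"
  have on_image: "?q summable_on r ` D"
    using f unfolding square_summable_def by (rule summable_on_subset) simp
  then have on_D: "(?q \<circ> r) summable_on D"
    using summable_on_reindex[OF inj] by blast
  show "square_summable (pull D r f)" unfolding square_summable_def
    by (rule summable_on_cong_neutral[THEN iffD2, OF _ _ _ on_D]) (auto simp: pull_def)
  have "sqnorm (pull D r f) = infsum (?q \<circ> r) D"
    unfolding sqnorm_def by (rule infsum_cong_neutral) (auto simp: pull_def)
  also have "\<dots> = infsum ?q (r ` D)"
    by (rule infsum_reindex[OF inj, symmetric])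
  also have "\<dots> \<le> sqnorm f" unfolding sqnorm_def
    by (rule infsum_mono_neutral[OF on_image]) (use f in \<open>auto simp: square_summable_def\<close>)
  finally show "sqnorm (pull D r f) \<le> sqnorm f" .
qed

lemma l2_bounded_pull: "inj_on r D \<Longrightarrow> l2_bounded 1 (pull D r)"
  by (simp add: l2_bounded_def square_summable_pull)

lemma l2_adjoint_pull:
  assumes left_inv: "\<And>x. x \<in> D \<Longrightarrow> t (r x) = x"
  shows "l2_adjoint (pull D r) (pull (r ` D) t)"
  unfolding l2_adjoint_def
proof (intro allI impI)
  fix f g
  have inj: "inj_on r D" using left_inv by (rule inj_on_inverseI)
  have "(\<Sum>\<^sub>\<infinity>x. pull D r f x * cnj (g x)) = (\<Sum>\<^sub>\<infinity>x\<in>D. f (r x) * cnj (g (t (r x))))"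
    by (rule infsum_cong_neutral) (auto simp: pull_def left_inv)
  also have "\<dots> = (\<Sum>\<^sub>\<infinity>y\<in>r ` D. f y * cnj (g (t y)))"
    by (subst infsum_reindex[OF inj]) (simp add: o_def)
  also have "\<dots> = (\<Sum>\<^sub>\<infinity>y. f y * cnj (pull (r ` D) t g y))"
    by (rule infsum_cong_neutral) (auto simp: pull_def)
  finally show "(\<Sum>\<^sub>\<infinity>x. pull D r f x * cnj (g x)) = (\<Sum>\<^sub>\<infinity>y. f y * cnj (pull (r ` D) t g y))" .
qed

lemma finite_support_add:
  fixes f g :: "'a \<Rightarrow> 'b::monoid_add"
  assumes "finite {x. f x \<noteq> 0}" and "finite {x. g x \<noteq> 0}"
  shows "finite {x. f x + g x \<noteq> 0}"
  by (rule finite_subset[where B = "{x. f x \<noteq> 0} \<union> {x. g x \<noteq> 0}"]) (use assms in auto)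

lemma finite_support_pull:
  assumes "inj_on r D" and "finite {y. f y \<noteq> 0}"
  shows "finite {x. pull D r f x \<noteq> 0}"
proof (rule finite_subset)
  show "{x. pull D r f x \<noteq> 0} \<subseteq> r -` {y. f y \<noteq> 0} \<inter> D" by (auto simp: pull_def)
  show "finite (r -` {y. f y \<noteq> 0} \<inter> D)" using assms by (intro finite_vimage_IntI)
qed

lemma Jform_gam_unitriangular:
  assumes fin: "finite {x. u x \<noteq> 0}" "finite {x. R x}"
    and M: "\<And>x. u x \<noteq> 0 \<Longrightarrow> M x c = (if x = c then 1 else 0) - (if R x then 1 else 0)"
  shows "Jform M u (gam c) = u c - (\<Sum>x | R x. u x)"
proof -
  let ?S = "{x. u x \<noteq> 0}"
  have "{x. gam c x \<noteq> 0} = {c}" by (auto simp: gam_def)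
  then have "Jform M u (gam c) = (\<Sum>x\<in>?S. u x * M x c)"
    by (simp add: Jform_def gam_def)
  also have "\<dots> = (\<Sum>x\<in>?S. (if x = c then u x else 0) - (if R x then u x else 0))"
    by (rule sum.cong) (simp_all add: M)
  also have "\<dots> = u c - sum u (?S \<inter> {x. R x})"
    using fin(1) by (simp add: sum_subtractf sum.inter_restrict)
  also have "sum u (?S \<inter> {x. R x}) = (\<Sum>x | R x. u x)"
    by (rule sum.mono_neutral_left) (use fin(2) in auto)
  finally show ?thesis .
qed

lemma l2_iff_square_summable:
  "f \<in> l2 W \<longleftrightarrow> (\<forall>c. c \<notin> CW W \<longrightarrow> f c = 0) \<and> square_summable f"
proof -
  have "(\<forall>c. c \<notin> CW W \<longrightarrow> f c = 0) \<Longrightarrow>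
      (\<lambda>c. (cmod (f c))\<^sup>2) summable_on CW W \<longleftrightarrow> (\<lambda>c. (cmod (f c))\<^sup>2) summable_on UNIV"
    by (rule summable_on_cong_neutral) auto
  then show ?thesis unfolding l2_def square_summable_def by auto
qed

lemma l2norm_eq_sqrt_sqnorm:
  assumes "\<forall>c. c \<notin> CW W \<longrightarrow> f c = 0"
  shows "l2norm W f = sqrt (sqnorm f)"
  unfolding l2norm_def sqnorm_def by (rule arg_cong[of _ _ sqrt], rule infsum_cong_neutral) (use assms in auto)

lemma l2inner_eq_infsum:
  assumes "\<forall>c. c \<notin> CW W \<longrightarrow> g c = 0"
  shows "l2inner W f g = (\<Sum>\<^sub>\<infinity>c. f c * cnj (g c))"
  unfolding l2inner_def by (rule infsum_cong_neutral) (use assms in auto)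

definition id_plus_op :: "diag \<Rightarrow> complex \<Rightarrow> ((crit \<Rightarrow> complex) \<Rightarrow> crit \<Rightarrow> complex) \<Rightarrow>
    (crit \<Rightarrow> complex) \<Rightarrow> crit \<Rightarrow> complex" where
  "id_plus_op W e P f = (\<lambda>c. if c \<in> CW W then f c + e * P f c else 0)"

lemma bounded_op_id_plus_op:
  assumes add: "\<And>f g. P (\<lambda>c. f c + g c) = (\<lambda>c. P f c + P g c)"
    and mult: "\<And>a f. P (\<lambda>c. a * f c) = (\<lambda>c. a * P f c)"
    and bounded: "l2_bounded K P"
  shows "bounded_op W (id_plus_op W e P)"
proof -
  let ?C = "2 + 2 * (cmod e)\<^sup>2 * K"
  have norm_le: "id_plus_op W e P f \<in> l2 W \<and> l2norm W (id_plus_op W e P f) \<le> sqrt ?C * l2norm W f"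
    if "f \<in> l2 W" for f
  proof -
    from that have supp: "\<forall>c. c \<notin> CW W \<longrightarrow> f c = 0" and f: "square_summable f"
      by (auto simp: l2_iff_square_summable)
    from f bounded have Pf: "square_summable (P f)" "sqnorm (P f) \<le> K * sqnorm f"
      by (auto simp: l2_bounded_def)
    note ePf = square_summable_cmult[OF Pf(1), of e]
    have eq: "id_plus_op W e P f = (\<lambda>c. if c \<in> CW W then (f + (\<lambda>c. e * P f c)) c else 0)"
      by (auto simp: id_plus_op_def fun_eq_iff)
    note sum = square_summable_add[OF f ePf(1)]
    have "sqnorm (id_plus_op W e P f) \<le> sqnorm (f + (\<lambda>c. e * P f c))"
      unfolding eq by (rule square_summable_restrict(2)[OF sum(1)])
    also have "\<dots> \<le> 2 * sqnorm f + 2 * ((cmod e)\<^sup>2 * sqnorm (P f))"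
      using sum(2) ePf(2) by simp
    also have "\<dots> \<le> ?C * sqnorm f"
      using mult_left_mono[OF Pf(2), of "(cmod e)\<^sup>2"] by (simp add: algebra_simps)
    finally have "sqrt (sqnorm (id_plus_op W e P f)) \<le> sqrt ?C * sqrt (sqnorm f)"
      by (metis real_sqrt_le_mono real_sqrt_mult)
    moreover have "id_plus_op W e P f \<in> l2 W"
      unfolding l2_iff_square_summable eq using square_summable_restrict(1)[OF sum(1)] by auto
    ultimately show ?thesis
      using supp l2norm_eq_sqrt_sqnorm l2_iff_square_summable by metis
  qed
  show ?thesis unfolding bounded_op_def
    by (intro conjI ballI allI exI[of _ "sqrt ?C"])
       (use norm_le in \<open>auto simp: id_plus_op_def add mult fun_eq_iff algebra_simps\<close>)
qed

lemma l2inner_id_plus_op_adjoint: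
  assumes adjoint: "l2_adjoint P Q"
    and "\<And>f. square_summable f \<Longrightarrow> square_summable (P f)"
      "\<And>g. square_summable g \<Longrightarrow> square_summable (Q g)"
    and real: "cnj e = e" and f: "f \<in> l2 W" and g: "g \<in> l2 W"
  shows "l2inner W (id_plus_op W e P f) g = l2inner W f (id_plus_op W e Q g)"
proof -
  from f have supp_f: "\<forall>c. c \<notin> CW W \<longrightarrow> f c = 0" and sf: "square_summable f"
    by (auto simp: l2_iff_square_summable)
  from g have supp_g: "\<forall>c. c \<notin> CW W \<longrightarrow> g c = 0" and sg: "square_summable g"
    by (auto simp: l2_iff_square_summable)
  have summable: "(\<lambda>c. f c * cnj (g c)) summable_on UNIV"
      "(\<lambda>c. P f c * cnj (g c)) summable_on UNIV" "(\<lambda>c. f c * cnj (Q g c)) summable_on UNIV"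
    using assms(2,3) sf sg by (auto intro: square_summable_mult_cnj)
  have supp_Qg: "\<forall>c. c \<notin> CW W \<longrightarrow> id_plus_op W e Q g c = 0"
    by (simp add: id_plus_op_def)
  have "l2inner W (id_plus_op W e P f) g = (\<Sum>\<^sub>\<infinity>c. f c * cnj (g c) + e * (P f c * cnj (g c)))"
    unfolding l2inner_eq_infsum[OF supp_g]
    by (rule infsum_cong) (use supp_g in \<open>auto simp: id_plus_op_def algebra_simps\<close>)
  also have "\<dots> = (\<Sum>\<^sub>\<infinity>c. f c * cnj (g c)) + e * (\<Sum>\<^sub>\<infinity>c. P f c * cnj (g c))"
    using summable by (simp add: infsum_add summable_on_cmult_right infsum_cmult_right)
  also have "\<dots> = (\<Sum>\<^sub>\<infinity>c. f c * cnj (g c)) + e * (\<Sum>\<^sub>\<infinity>c. f c * cnj (Q g c))"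
    using adjoint sf sg by (simp add: l2_adjoint_def)
  also have "\<dots> = (\<Sum>\<^sub>\<infinity>c. f c * cnj (g c) + e * (f c * cnj (Q g c)))"
    using summable by (simp add: infsum_add summable_on_cmult_right infsum_cmult_right)
  also have "\<dots> = l2inner W f (id_plus_op W e Q g)"
    unfolding l2inner_eq_infsum[of W "id_plus_op W e Q g", OF supp_Qg]
    by (rule infsum_cong) (use supp_f real in \<open>auto simp: id_plus_op_def algebra_simps\<close>)
  finally show ?thesis .
qed

text \<open>The hypotheses on Z make \<open>P\<^sup>2 = 0\<close>.\<close>

lemma id_plus_op_inverse:
  assumes supp: "\<forall>c. c \<notin> CW W \<longrightarrow> u c = 0"
    and vanishes: "\<And>f c. c \<in> Z \<Longrightarrow> P f c = 0"
    and reads: "\<And>f g. (\<And>c. c \<in> Z \<Longrightarrow> f c = g c) \<Longrightarrow> P f = P g"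
  shows "id_plus_op W e P (id_plus_op W (-e) P u) = u"
proof -
  have "P (id_plus_op W (-e) P u) = P u"
    by (rule reads) (use supp vanishes in \<open>auto simp: id_plus_op_def\<close>)
  then show ?thesis using supp by (auto simp: id_plus_op_def fun_eq_iff)
qed

lemma id_plus_op_HW:
  assumes u: "u \<in> HW W" and Pu: "finite {c. P u c \<noteq> 0}"
  shows "id_plus_op W e P u \<in> HW W"
proof -
  have "{c. id_plus_op W e P u c \<noteq> 0} \<subseteq> {c. u c \<noteq> 0} \<union> {c. P u c \<noteq> 0}"
    by (auto simp: id_plus_op_def)
  then have "finite {c. id_plus_op W e P u c \<noteq> 0}"
    using u Pu unfolding HW_def by (auto intro: finite_subset)
  then show ?thesis unfolding HW_def by (auto simp: id_plus_op_def)
qed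

fun crit_index :: "crit \<Rightarrow> nat" where
  "crit_index (C0 n) = n"
| "crit_index (C1 n) = n"
| "crit_index C0p = 0"
| "crit_index C0m = 0"

text \<open>The adjacency operator N with \<open>Jdot W = 1 - N\<close>: for \<open>n \<ge> 1\<close>,
  \<open>(N f)(c_1^(n)) = f(c_0^(n)) + f(c_0^(n-1))\<close>, where for \<open>n = 1\<close> the missing term
  is replaced by \<open>f(c_0^+) + f(c_0^-)\<close>, which vanishes on \<open>l2 W\<close> when W is of type A.\<close>

definition adjacency_op :: "(crit \<Rightarrow> complex) \<Rightarrow> crit \<Rightarrow> complex" where
  "adjacency_op =
     (pull (range C1) (C0 \<circ> crit_index) + pull {C1 n | n. n \<ge> 2} (\<lambda>c. C0 (crit_index c - 1))) +
     (pull {C1 1} (\<lambda>_. C0p) + pull {C1 1} (\<lambda>_. C0m))"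

definition adjacency_op_t :: "(crit \<Rightarrow> complex) \<Rightarrow> crit \<Rightarrow> complex" where
  "adjacency_op_t =
     (pull (range C0) (C1 \<circ> crit_index) + pull {C0 n | n. n \<ge> 1} (\<lambda>c. C1 (crit_index c + 1))) +
     (pull {C0p} (\<lambda>_. C1 1) + pull {C0m} (\<lambda>_. C1 1))"

lemma l2_bounded_adjacency_op: "l2_bounded 16 adjacency_op"
proof -
  have "l2_bounded (2 * (2 * 1 + 2 * 1) + 2 * (2 * 1 + 2 * 1)) adjacency_op"
    unfolding adjacency_op_def
    by (intro l2_bounded_add l2_bounded_pull) (auto simp: inj_on_def)
  then show ?thesis by simp
qed

lemma l2_bounded_adjacency_op_t: "l2_bounded 16 adjacency_op_t"
proof -
  have "l2_bounded (2 * (2 * 1 + 2 * 1) + 2 * (2 * 1 + 2 * 1)) adjacency_op_t"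
    unfolding adjacency_op_t_def
    by (intro l2_bounded_add l2_bounded_pull) (auto simp: inj_on_def)
  then show ?thesis by simp
qed

lemma l2_adjoint_adjacency_op: "l2_adjoint adjacency_op adjacency_op_t"
proof -
  have image: "(C0 \<circ> crit_index) ` range C1 = range C0"
      "(\<lambda>c. C0 (crit_index c - 1)) ` {C1 n | n. n \<ge> 2} = {C0 n | n. n \<ge> 1}"
    by (force simp: image_iff intro: exI[of _ "C1 (Suc _)"])+
  have "l2_adjoint (pull (range C1) (C0 \<circ> crit_index)) (pull (range C0) (C1 \<circ> crit_index))"
    by (rule l2_adjoint_pull[of "range C1" "C1 \<circ> crit_index" "C0 \<circ> crit_index", unfolded image(1)]) auto
  moreover have "l2_adjoint (pull {C1 n | n. n \<ge> 2} (\<lambda>c. C0 (crit_index c - 1)))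
       (pull {C0 n | n. n \<ge> 1} (\<lambda>c. C1 (crit_index c + 1)))"
    by (rule l2_adjoint_pull[of "{C1 n | n. n \<ge> 2}" "\<lambda>c. C1 (crit_index c + 1)"
          "\<lambda>c. C0 (crit_index c - 1)", unfolded image(2)])
      auto
  moreover have "l2_adjoint (pull {C1 1} (\<lambda>_. C0p)) (pull {C0p} (\<lambda>_. C1 1))"
    "l2_adjoint (pull {C1 1} (\<lambda>_. C0m)) (pull {C0m} (\<lambda>_. C1 1))"
    using l2_adjoint_pull[of "{C1 1}" "\<lambda>_. C1 1" "\<lambda>_. C0p"] l2_adjoint_pull[of "{C1 1}" "\<lambda>_. C1 1" "\<lambda>_. C0m"]
    by auto
  ultimately show ?thesis unfolding adjacency_op_def adjacency_op_t_def
    by (intro l2_adjoint_add) (auto intro!: square_summable_add square_summable_pull simp: inj_on_def)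
qed

lemma adjacency_op_linear:
  "adjacency_op (\<lambda>c. f c + g c) = (\<lambda>c. adjacency_op f c + adjacency_op g c)"
  "adjacency_op (\<lambda>c. a * f c) = (\<lambda>c. a * adjacency_op f c)"
  by (auto simp: adjacency_op_def pull_def fun_eq_iff algebra_simps)

lemma adjacency_op_t_linear:
  "adjacency_op_t (\<lambda>c. f c + g c) = (\<lambda>c. adjacency_op_t f c + adjacency_op_t g c)"
  "adjacency_op_t (\<lambda>c. a * f c) = (\<lambda>c. a * adjacency_op_t f c)"
  by (auto simp: adjacency_op_t_def pull_def fun_eq_iff algebra_simps)

lemma adjacency_op_vanishes_off_C1: "c \<notin> range C1 \<Longrightarrow> adjacency_op f c = 0"
  by (auto simp: adjacency_op_def pull_def)

lemma adjacency_op_reads_off_C1: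
  assumes "\<And>c. c \<notin> range C1 \<Longrightarrow> f c = g c"
  shows "adjacency_op f = adjacency_op g"
proof -
  have "f (C0 n) = g (C0 n)" "f C0p = g C0p" "f C0m = g C0m" for n
    using assms by auto
  then show ?thesis by (auto simp: adjacency_op_def pull_def fun_eq_iff)
qed

lemma adjacency_op_t_vanishes_on_C1: "c \<in> range C1 \<Longrightarrow> adjacency_op_t f c = 0"
  by (auto simp: adjacency_op_t_def pull_def)

lemma adjacency_op_t_reads_on_C1:
  assumes "\<And>c. c \<in> range C1 \<Longrightarrow> f c = g c"
  shows "adjacency_op_t f = adjacency_op_t g"
  using assms by (auto simp: adjacency_op_t_def pull_def fun_eq_iff)

lemma finite_support_adjacency_op:
  assumes "finite {c. f c \<noteq> 0}"
  shows "finite {c. adjacency_op f c \<noteq> 0}"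
  unfolding adjacency_op_def plus_fun_apply
  by (intro finite_support_add finite_support_pull assms) (auto simp: inj_on_def)

lemma finite_support_adjacency_op_t:
  assumes "finite {c. f c \<noteq> 0}"
  shows "finite {c. adjacency_op_t f c \<noteq> 0}"
  unfolding adjacency_op_t_def plus_fun_apply
  by (intro finite_support_add finite_support_pull assms) (auto simp: inj_on_def)

lemma finite_neighbours:
  "finite {x. adj W x c}" "finite {x. adj W c x}"
proof -
  show "finite {x. adj W x c}"
    by (rule finite_subset[of _ "{C0 (crit_index c), C0 (crit_index c - 1), C0p, C0m}"])
       (auto simp: adj_def)
  show "finite {x. adj W c x}"
    by (rule finite_subset[of _ "{C1 (crit_index c), C1 (crit_index c + 1), C1 1}"])
       (auto simp: adj_def)
qed

lemma adjacency_op_eq_sum_neighbours: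
  assumes c: "c \<in> CW W" and supp: "\<forall>x. x \<notin> CW W \<longrightarrow> u x = 0"
  shows "adjacency_op u c = (\<Sum>x | adj W x c. u x)"
proof (cases "c \<in> range C1")
  case False
  then have "{x. adj W x c} = {}" by (auto simp: adj_def CW1_def)
  then show ?thesis using False by (simp add: adjacency_op_vanishes_off_C1)
next
  case True
  then obtain n where n: "c = C1 n" "n \<ge> 1"
    using c by (auto simp: CW_def CW0_def CW1_def split: if_splits)
  consider "n = 1" "W = A_half_inf" | "n = 1" "W = D_half_inf" | "n \<ge> 2"
    using n(2) by (cases W) fastforce+
  then show ?thesis
  proof cases
    case 1
    then have "{x. adj W x c} = {C0 1}" and "u C0p = 0" "u C0m = 0"
      using n supp by (auto simp: adj_def CW_def CW0_def CW1_def)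
    then show ?thesis using 1 n by (simp add: adjacency_op_def pull_def)
  next
    case 2
    then have "{x. adj W x c} = {C0 1, C0p, C0m}"
      using n by (auto simp: adj_def CW0_def CW1_def)
    then show ?thesis using 2 n by (simp add: adjacency_op_def pull_def)
  next
    case 3
    then have "{x. adj W x c} = {C0 n, C0 (n - 1)}"
      using n by (auto simp: adj_def CW0_def CW1_def)
    then show ?thesis using 3 n by (simp add: adjacency_op_def pull_def)
  qed
qed

lemma adjacency_op_t_eq_sum_neighbours:
  assumes c: "c \<in> CW W"
  shows "adjacency_op_t u c = (\<Sum>x | adj W c x. u x)"
proof (cases c)
  case (C0 n)
  then have "n \<ge> 1" using c by (auto simp: CW_def CW0_def CW1_def split: if_splits)
  moreover from this have "{x. adj W c x} = {C1 n, C1 (n + 1)}"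
    using C0 by (auto simp: adj_def CW0_def CW1_def)
  ultimately show ?thesis using C0 by (simp add: adjacency_op_t_def pull_def)
next
  case (C1 n)
  then have "{x. adj W c x} = {}" by (auto simp: adj_def CW0_def)
  then show ?thesis using C1 by (simp add: adjacency_op_t_vanishes_on_C1)
next
  case C0p
  then have "{x. adj W c x} = {C1 1}"
    using c by (auto simp: adj_def CW_def CW0_def CW1_def split: if_splits)
  then show ?thesis using C0p by (simp add: adjacency_op_t_def pull_def image_iff)
next
  case C0m
  then have "{x. adj W c x} = {C1 1}"
    using c by (auto simp: adj_def CW_def CW0_def CW1_def split: if_splits)
  then show ?thesis using C0m by (simp add: adjacency_op_t_def pull_def image_iff)
qed

lemma adj_irrefl: "\<not> adj W c c"
  by (auto simp: adj_def CW0_def CW1_def)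

lemma HW_zero_off_CW: "u \<in> HW W \<Longrightarrow> \<forall>c. c \<notin> CW W \<longrightarrow> u c = 0"
  and HW_finite_support: "u \<in> HW W \<Longrightarrow> finite {c. u c \<noteq> 0}"
  by (simp_all add: HW_def)

lemma Jdot_eq_id_plus_op:
  assumes u: "u \<in> HW W"
  shows "Jdot W u = id_plus_op W (-1) adjacency_op u"
proof
  fix c
  show "Jdot W u c = id_plus_op W (-1) adjacency_op u c"
  proof (cases "c \<in> CW W")
    case True
    have "Jform (Jm W) u (gam c) = u c - (\<Sum>x | adj W x c. u x)"
      by (rule Jform_gam_unitriangular[OF HW_finite_support[OF u] finite_neighbours(1)])
         (use True HW_zero_off_CW[OF u] adj_irrefl in \<open>auto simp: Jm_def\<close>)
    then show ?thesis
      using adjacency_op_eq_sum_neighbours[OF True HW_zero_off_CW[OF u]] True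
      by (simp add: Jdot_def id_plus_op_def)
  qed (simp add: Jdot_def id_plus_op_def)
qed

lemma tJdot_eq_id_plus_op:
  assumes u: "u \<in> HW W"
  shows "tJdot W u = id_plus_op W (-1) adjacency_op_t u"
proof
  fix c
  show "tJdot W u c = id_plus_op W (-1) adjacency_op_t u c"
  proof (cases "c \<in> CW W")
    case True
    have "Jform (tJm W) u (gam c) = u c - (\<Sum>x | adj W c x. u x)"
      by (rule Jform_gam_unitriangular[OF HW_finite_support[OF u] finite_neighbours(2)])
         (use True HW_zero_off_CW[OF u] adj_irrefl in \<open>auto simp: tJm_def Jm_def\<close>)
    then show ?thesis
      using adjacency_op_t_eq_sum_neighbours[OF True] True
      by (simp add: tJdot_def id_plus_op_def)
  qed (simp add: tJdot_def id_plus_op_def)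
qed

lemma id_plus_adjacency_op_inverse:
  assumes "u \<in> HW W"
  shows "id_plus_op W e adjacency_op (id_plus_op W (-e) adjacency_op u) = u"
    and "id_plus_op W e adjacency_op_t (id_plus_op W (-e) adjacency_op_t u) = u"
proof -
  show "id_plus_op W e adjacency_op (id_plus_op W (-e) adjacency_op u) = u"
    by (rule id_plus_op_inverse[OF HW_zero_off_CW[OF assms], where Z = "- range C1"])
       (auto intro: adjacency_op_vanishes_off_C1 adjacency_op_reads_off_C1)
  show "id_plus_op W e adjacency_op_t (id_plus_op W (-e) adjacency_op_t u) = u"
    by (rule id_plus_op_inverse[OF HW_zero_off_CW[OF assms], where Z = "range C1"])
       (auto intro: adjacency_op_t_vanishes_on_C1 adjacency_op_t_reads_on_C1)
qed

lemma id_plus_adjacency_op_HW: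
  assumes "u \<in> HW W"
  shows "id_plus_op W e adjacency_op u \<in> HW W" and "id_plus_op W e adjacency_op_t u \<in> HW W"
  by (rule id_plus_op_HW[OF assms, where P = adjacency_op],
      rule finite_support_adjacency_op[OF HW_finite_support[OF assms]])
     (rule id_plus_op_HW[OF assms, where P = adjacency_op_t],
      rule finite_support_adjacency_op_t[OF HW_finite_support[OF assms]])

lemma id_plus_op_inverse_on_HW:
  assumes inverse: "\<And>u e. u \<in> HW W \<Longrightarrow> id_plus_op W e P (id_plus_op W (-e) P u) = u"
    and closed: "\<And>u e. u \<in> HW W \<Longrightarrow> id_plus_op W e P u \<in> HW W"
    and F: "\<And>u. u \<in> HW W \<Longrightarrow> F u = id_plus_op W (-1) P u"
  shows "bij_betw F (HW W) (HW W)"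
    and "u \<in> HW W \<Longrightarrow> inv_into (HW W) F u = id_plus_op W 1 P u"
proof -
  have left: "id_plus_op W 1 P (id_plus_op W (-1) P u) = u"
    and right: "id_plus_op W (-1) P (id_plus_op W 1 P u) = u" if "u \<in> HW W" for u
    using inverse[OF that, of 1] inverse[OF that, of "-1"] by simp_all
  show bij: "bij_betw F (HW W) (HW W)"
    by (rule bij_betw_byWitness[where f' = "id_plus_op W 1 P"]) (auto simp: left right F closed)
  show "inv_into (HW W) F u = id_plus_op W 1 P u" if "u \<in> HW W"
    by (rule inv_into_f_eq[OF bij_betw_imp_inj_on[OF bij]]) (simp_all add: right F closed that)
qed

lemmas Jdot_inverse = id_plus_op_inverse_on_HW[OF id_plus_adjacency_op_inverse(1)
    id_plus_adjacency_op_HW(1) Jdot_eq_id_plus_op]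

lemmas tJdot_inverse = id_plus_op_inverse_on_HW[OF id_plus_adjacency_op_inverse(2)
    id_plus_adjacency_op_HW(2) tJdot_eq_id_plus_op]

lemma bounded_op_id_plus_adjacency_op:
  "bounded_op W (id_plus_op W e adjacency_op)" "bounded_op W (id_plus_op W e adjacency_op_t)"
  by (rule bounded_op_id_plus_op[OF adjacency_op_linear l2_bounded_adjacency_op],
      rule bounded_op_id_plus_op[OF adjacency_op_t_linear l2_bounded_adjacency_op_t])

lemma l2inner_id_plus_adjacency_op_adjoint:
  assumes "cnj e = e" "f \<in> l2 W" "g \<in> l2 W"
  shows "l2inner W (id_plus_op W e adjacency_op f) g = l2inner W f (id_plus_op W e adjacency_op_t g)"
  using l2_bounded_adjacency_op l2_bounded_adjacency_op_t
  by (intro l2inner_id_plus_op_adjoint[OF l2_adjoint_adjacency_op _ _ assms])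
     (auto simp: l2_bounded_def)

theorem mainTheorem7:
  fixes W :: diag
  shows "bij_betw (Jdot W) (HW W) (HW W) \<and> bij_betw (tJdot W) (HW W) (HW W) \<and>
    (\<exists>T tT S tS.
       bounded_op W T \<and> bounded_op W tT \<and> bounded_op W S \<and> bounded_op W tS \<and>
       (\<forall>u\<in>HW W. T u = Jdot W u) \<and>
       (\<forall>u\<in>HW W. tT u = tJdot W u) \<and>
       (\<forall>u\<in>HW W. S u = inv_into (HW W) (Jdot W) u) \<and>
       (\<forall>u\<in>HW W. tS u = inv_into (HW W) (tJdot W) u) \<and>
       (\<forall>f\<in>l2 W. \<forall>g\<in>l2 W. l2inner W (T f) g = l2inner W f (tT g)) \<and>
       (\<forall>f\<in>l2 W. \<forall>g\<in>l2 W. l2inner W (S f) g = l2inner W f (tS g)))"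
  by (intro conjI Jdot_inverse(1) tJdot_inverse(1)
        exI[of _ "id_plus_op W (-1) adjacency_op"] exI[of _ "id_plus_op W (-1) adjacency_op_t"]
        exI[of _ "id_plus_op W 1 adjacency_op"] exI[of _ "id_plus_op W 1 adjacency_op_t"]
        ballI bounded_op_id_plus_adjacency_op l2inner_id_plus_adjacency_op_adjoint)
     (simp_all add: Jdot_eq_id_plus_op tJdot_eq_id_plus_op Jdot_inverse(2) tJdot_inverse(2))

end
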